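(* Let $\alpha>0$, $\beta,\eta,\kappa\in\mathbb{R}$, $\rho>0$, $p\geq 1$, and $0\le a<x$. Let $f,g$ be two positive functions on $[0,\infty)$ with $f,g\in X^{p}_{c}(a,x)$ (for some $c\in\mathbb{R}$), such that ${}^{\rho}\mathcal{I}^{\alpha,\beta}_{a+,\eta,\kappa}f^{p}(x)<\infty$ and ${}^{\rho}\mathcal{I}^{\alpha,\beta}_{a+,\eta,\kappa}g^{p}(x)<\infty$. Suppose there are real numbers $m,M$ and $\gamma$ with $0<\gamma<m\leq \frac{f(t)}{g(t)}\leq M$ for all $t\in[a,x]$. Then $$\frac{M+1}{M-\gamma}\left({}^{\rho}\mathcal{I}^{\alpha,\beta}_{a+,\eta,\kappa}(f-\gamma g)^{p}(x)\right)^{1/p}\leq\left({}^{\rho}\mathcal{I}^{\alpha,\beta}_{a+,\eta,\kappa}f^{p}(x)\right)^{1/p}+\left({}^{\rho}\mathcal{I}^{\alpha,\beta}_{a+,\eta,\kappa}g^{p}(x)\right)^{1/p}\leq\frac{m+1}{m-\gamma}\left({}^{\rho}\mathcal{I}^{\alpha,\beta}_{a+,\eta,\kappa}(f-\gamma g)^{p}(x)\right)^{1/p}.$$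
   Context: For $c\in\mathbb{R}$ and $1\le p<\infty$, $X^{p}_{c}(a,b)$ denotes the space of Lebesgue measurable functions $f$ on $(a,b)$ with $\left(\int_a^b |t^{c}f(t)|^{p}\,\frac{dt}{t}\right)^{1/p}<\infty$. For $\alpha>0$, $\beta,\eta,\kappa\in\mathbb{R}$, $\rho>0$, $0\le a<x$, and a function $\varphi$, the generalized (Katugampola) fractional integral is $${}^{\rho}\mathcal{I}^{\alpha,\beta}_{a+,\eta,\kappa}\varphi(x)=\frac{\rho^{1-\beta}x^{\kappa}}{\Gamma(\alpha)}\int_{a}^{x}\frac{\tau^{\rho(\eta+1)-1}}{(x^{\rho}-\tau^{\rho})^{1-\alpha}}\varphi(\tau)\,d\tau,$$ whenever the integral exists. ${}^{\rho}\mathcal{I}^{\alpha,\beta}_{a+,\eta,\kappa}(f-\gamma g)^{p}(x)$ means the operator applied to $\tau\mapsto (f(\tau)-\gamma g(\tau))^p$, evaluated at $x$. *)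

theory Defs
  imports "HOL-Analysis.Analysis"
begin

definition in_Xpc :: "real \<Rightarrow> real \<Rightarrow> real \<Rightarrow> real \<Rightarrow> (real \<Rightarrow> real) \<Rightarrow> bool" where
  "in_Xpc c p a b f \<longleftrightarrow>
     set_borel_measurable lebesgue {a<..<b} f \<and>
     set_integrable lebesgue {a<..<b} (\<lambda>t. \<bar>t powr c * f t\<bar> powr p / t)"

definition kat_kernel :: "real \<Rightarrow> real \<Rightarrow> real \<Rightarrow> real \<Rightarrow> real \<Rightarrow> real" where
  "kat_kernel \<rho> \<alpha> \<eta> x \<tau> =
     \<tau> powr (\<rho> * (\<eta> + 1) - 1) / (x powr \<rho> - \<tau> powr \<rho>) powr (1 - \<alpha>)"

definition kat_integrable :: "real \<Rightarrow> real \<Rightarrow> real \<Rightarrow> real \<Rightarrow> (real \<Rightarrow> real) \<Rightarrow> real \<Rightarrow> bool" where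
  "kat_integrable \<rho> \<alpha> \<eta> a \<phi> x \<longleftrightarrow>
     set_integrable lebesgue {a<..<x} (\<lambda>\<tau>. kat_kernel \<rho> \<alpha> \<eta> x \<tau> * \<phi> \<tau>)"

definition kat_int :: "real \<Rightarrow> real \<Rightarrow> real \<Rightarrow> real \<Rightarrow> real \<Rightarrow> real \<Rightarrow> (real \<Rightarrow> real) \<Rightarrow> real \<Rightarrow> real" where
  "kat_int \<rho> \<alpha> \<beta> \<eta> \<kappa> a \<phi> x =
     \<rho> powr (1 - \<beta>) * x powr \<kappa> / Gamma \<alpha> *
     (LINT \<tau>:{a<..<x}|lebesgue. kat_kernel \<rho> \<alpha> \<eta> x \<tau> * \<phi> \<tau>)"

end

theory Submission
  imports Defs
begin

text \<open>On (a, x) the hypothesis gives (m - \<gamma>) g \<le> f - \<gamma> g \<le> (M - \<gamma>) g and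
  (m - \<gamma>)/m f \<le> f - \<gamma> g \<le> (M - \<gamma>)/M f. The Katugampola operator is a positive linear
  functional, so a pointwise bound 0 \<le> u \<le> c v yields I(u^p)^(1/p) \<le> c I(v^p)^(1/p).
  Adding the four resulting inequalities in pairs gives both sides of the claim.\<close>

lemma kat_kernel_nonneg: "0 \<le> kat_kernel \<rho> \<alpha> \<eta> x \<tau>"
  unfolding kat_kernel_def by simp

lemma kat_kernel_measurable: "kat_kernel \<rho> \<alpha> \<eta> x \<in> borel_measurable lebesgue"
  by (rule measurable_completion) (unfold kat_kernel_def, measurable)

lemma kat_int_factor_nonneg:
  fixes \<alpha> :: real
  assumes "\<alpha> > 0"
  shows "0 \<le> \<rho> powr (1 - \<beta>) * x powr \<kappa> / Gamma \<alpha>"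
  using Gamma_real_pos[OF assms] by simp

lemma kat_int_nonneg:
  assumes "\<alpha> > 0" and "\<And>\<tau>. \<tau> \<in> {a<..<x} \<Longrightarrow> 0 \<le> \<phi> \<tau>"
  shows "0 \<le> kat_int \<rho> \<alpha> \<beta> \<eta> \<kappa> a \<phi> x"
proof -
  have "0 \<le> (LINT \<tau>:{a<..<x}|lebesgue. kat_kernel \<rho> \<alpha> \<eta> x \<tau> * \<phi> \<tau>)"
    unfolding set_lebesgue_integral_def
    using assms(2) kat_kernel_nonneg by (intro integral_nonneg_AE) (auto simp: indicator_def)
  then show ?thesis
    unfolding kat_int_def by (rule mult_nonneg_nonneg[OF kat_int_factor_nonneg[OF assms(1)]])
qed

lemma kat_int_mono:
  assumes "\<alpha> > 0" and "kat_integrable \<rho> \<alpha> \<eta> a \<phi> x" and "kat_integrable \<rho> \<alpha> \<eta> a \<psi> x"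
    and "\<And>\<tau>. \<tau> \<in> {a<..<x} \<Longrightarrow> \<phi> \<tau> \<le> \<psi> \<tau>"
  shows "kat_int \<rho> \<alpha> \<beta> \<eta> \<kappa> a \<phi> x \<le> kat_int \<rho> \<alpha> \<beta> \<eta> \<kappa> a \<psi> x"
  unfolding kat_int_def
  using assms kat_kernel_nonneg kat_int_factor_nonneg[OF assms(1)]
  by (intro mult_left_mono set_integral_mono) (auto simp: kat_integrable_def mult_left_mono)

lemma kat_integrable_cmult:
  "kat_integrable \<rho> \<alpha> \<eta> a \<phi> x \<Longrightarrow> kat_integrable \<rho> \<alpha> \<eta> a (\<lambda>\<tau>. c * \<phi> \<tau>) x"
  unfolding kat_integrable_def
  by (simp add: mult.left_commute[of _ c] set_integrable_mult_right)

lemma kat_int_cmult: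
  "kat_int \<rho> \<alpha> \<beta> \<eta> \<kappa> a (\<lambda>\<tau>. c * \<phi> \<tau>) x = c * kat_int \<rho> \<alpha> \<beta> \<eta> \<kappa> a \<phi> x"
  unfolding kat_int_def by (simp add: mult.left_commute[of _ c])

lemma kat_integrable_bound:
  assumes "kat_integrable \<rho> \<alpha> \<eta> a \<psi> x"
    and "\<phi> \<in> borel_measurable (restrict_space lebesgue {a<..<x})"
    and "\<And>\<tau>. \<tau> \<in> {a<..<x} \<Longrightarrow> \<bar>\<phi> \<tau>\<bar> \<le> \<psi> \<tau>"
  shows "kat_integrable \<rho> \<alpha> \<eta> a \<phi> x"
  unfolding kat_integrable_def
proof (rule set_integrable_bound)
  show "set_integrable lebesgue {a<..<x} (\<lambda>\<tau>. kat_kernel \<rho> \<alpha> \<eta> x \<tau> * \<psi> \<tau>)"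
    using assms(1) unfolding kat_integrable_def .
  have "(\<lambda>\<tau>. kat_kernel \<rho> \<alpha> \<eta> x \<tau> * \<phi> \<tau>) \<in> borel_measurable (restrict_space lebesgue {a<..<x})"
    by (intro borel_measurable_times measurable_restrict_space1[OF kat_kernel_measurable] assms(2))
  then show "set_borel_measurable lebesgue {a<..<x} (\<lambda>\<tau>. kat_kernel \<rho> \<alpha> \<eta> x \<tau> * \<phi> \<tau>)"
    unfolding set_borel_measurable_def by (subst (asm) borel_measurable_restrict_space_iff) auto
  show "AE \<tau> in lebesgue. \<tau> \<in> {a<..<x} \<longrightarrow>
      norm (kat_kernel \<rho> \<alpha> \<eta> x \<tau> * \<phi> \<tau>) \<le> norm (kat_kernel \<rho> \<alpha> \<eta> x \<tau> * \<psi> \<tau>)"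
    using assms(3) kat_kernel_nonneg
    by (intro AE_I2) (force simp: abs_mult intro: mult_left_mono)
qed

lemma powr_inverse_le_of_le_powr_mult:
  fixes A B c p :: real
  assumes "0 \<le> A" and "A \<le> c powr p * B" and "c > 0" and "p > 0"
  shows "A powr (1 / p) \<le> c * B powr (1 / p)"
proof -
  have "0 \<le> c powr p * B"
    using assms(1,2) by linarith
  then have "0 \<le> B"
    using assms(3) by (simp add: zero_le_mult_iff)
  have "A powr (1 / p) \<le> (c powr p * B) powr (1 / p)"
    using assms by (intro powr_mono2) auto
  also have "\<dots> = c * B powr (1 / p)"
    using \<open>0 \<le> B\<close> assms(3,4) by (simp add: powr_mult powr_powr)
  finally show ?thesis .
qed

lemma kat_int_powr_root_le:
  assumes "\<alpha> > 0" and "p > 0" and "c > 0"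
    and "kat_integrable \<rho> \<alpha> \<eta> a (\<lambda>\<tau>. u \<tau> powr p) x"
    and "kat_integrable \<rho> \<alpha> \<eta> a (\<lambda>\<tau>. v \<tau> powr p) x"
    and "\<And>\<tau>. \<tau> \<in> {a<..<x} \<Longrightarrow> 0 \<le> u \<tau> \<and> u \<tau> \<le> c * v \<tau>"
  shows "kat_int \<rho> \<alpha> \<beta> \<eta> \<kappa> a (\<lambda>\<tau>. u \<tau> powr p) x powr (1 / p)
    \<le> c * kat_int \<rho> \<alpha> \<beta> \<eta> \<kappa> a (\<lambda>\<tau>. v \<tau> powr p) x powr (1 / p)"
proof (rule powr_inverse_le_of_le_powr_mult)
  have powr_le: "u \<tau> powr p \<le> c powr p * v \<tau> powr p" if "\<tau> \<in> {a<..<x}" for \<tau>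
  proof -
    have "0 \<le> v \<tau>"
      using assms(3) assms(6)[OF that] by (meson order.trans zero_le_mult_iff not_le)
    have "u \<tau> powr p \<le> (c * v \<tau>) powr p"
      using assms(2) assms(6)[OF that] by (intro powr_mono2) auto
    also have "\<dots> = c powr p * v \<tau> powr p"
      using assms(3) \<open>0 \<le> v \<tau>\<close> by (simp add: powr_mult)
    finally show ?thesis .
  qed
  show "kat_int \<rho> \<alpha> \<beta> \<eta> \<kappa> a (\<lambda>\<tau>. u \<tau> powr p) x
      \<le> c powr p * kat_int \<rho> \<alpha> \<beta> \<eta> \<kappa> a (\<lambda>\<tau>. v \<tau> powr p) x"
    using kat_int_mono[OF assms(1,4) kat_integrable_cmult[OF assms(5)] powr_le]
    by (simp add: kat_int_cmult)
  show "0 \<le> kat_int \<rho> \<alpha> \<beta> \<eta> \<kappa> a (\<lambda>\<tau>. u \<tau> powr p) x"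
    using assms(1) by (rule kat_int_nonneg) simp
qed (use assms in auto)

lemma in_Xpc_measurable:
  "in_Xpc c p a b f \<Longrightarrow> f \<in> borel_measurable (restrict_space lebesgue {a<..<b})"
  unfolding in_Xpc_def set_borel_measurable_def by (simp add: borel_measurable_restrict_space_iff)

lemma diff_ratio_bounds:
  fixes f g m M \<gamma> :: real
  assumes "0 < \<gamma>" and "\<gamma> < m" and "0 < g" and "m * g \<le> f" and "f \<le> M * g"
  shows "0 \<le> f" and "0 \<le> f - \<gamma> * g" and "f - \<gamma> * g \<le> f"
    and "f - \<gamma> * g \<le> (M - \<gamma>) / M * f" and "f - \<gamma> * g \<le> (M - \<gamma>) * g"
    and "f \<le> m / (m - \<gamma>) * (f - \<gamma> * g)" and "g \<le> 1 / (m - \<gamma>) * (f - \<gamma> * g)"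
proof -
  have "m \<le> M" and "\<gamma> * g \<le> m * g"
    using assms by (auto intro: mult_right_mono dest: order.trans[of _ f] mult_right_le_imp_le)
  then show "0 \<le> f - \<gamma> * g" and "0 \<le> f" and "f - \<gamma> * g \<le> f"
    using assms mult_pos_pos[of \<gamma> g] by linarith+
  show "f - \<gamma> * g \<le> (M - \<gamma>) * g"
    using assms by (simp add: left_diff_distrib)
  have "\<gamma> * f \<le> \<gamma> * (M * g)" and "\<gamma> * (m * g) \<le> \<gamma> * f"
    using assms by simp_all
  then show "f - \<gamma> * g \<le> (M - \<gamma>) / M * f" and "f \<le> m / (m - \<gamma>) * (f - \<gamma> * g)"
    and "g \<le> 1 / (m - \<gamma>) * (f - \<gamma> * g)"
    using assms \<open>m \<le> M\<close> by (simp_all add: field_simps)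
qed

theorem theorem12:
  fixes \<alpha> \<beta> \<eta> \<kappa> \<rho> p a x c m M \<gamma> :: real
    and f g :: "real \<Rightarrow> real"
  assumes "\<alpha> > 0" and "\<rho> > 0" and "p \<ge> 1" and "0 \<le> a" and "a < x"
    and "\<And>t. t \<ge> 0 \<Longrightarrow> f t > 0" and "\<And>t. t \<ge> 0 \<Longrightarrow> g t > 0"
    and "in_Xpc c p a x f" and "in_Xpc c p a x g"
    and "kat_integrable \<rho> \<alpha> \<eta> a (\<lambda>\<tau>. f \<tau> powr p) x"
    and "kat_integrable \<rho> \<alpha> \<eta> a (\<lambda>\<tau>. g \<tau> powr p) x"
    and "0 < \<gamma>" and "\<gamma> < m"
    and "\<And>t. t \<in> {a..x} \<Longrightarrow> m \<le> f t / g t \<and> f t / g t \<le> M"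
  shows "((M + 1) / (M - \<gamma>) *
           kat_int \<rho> \<alpha> \<beta> \<eta> \<kappa> a (\<lambda>\<tau>. (f \<tau> - \<gamma> * g \<tau>) powr p) x powr (1 / p)
         \<le> kat_int \<rho> \<alpha> \<beta> \<eta> \<kappa> a (\<lambda>\<tau>. f \<tau> powr p) x powr (1 / p)
           + kat_int \<rho> \<alpha> \<beta> \<eta> \<kappa> a (\<lambda>\<tau>. g \<tau> powr p) x powr (1 / p))
       \<and> (kat_int \<rho> \<alpha> \<beta> \<eta> \<kappa> a (\<lambda>\<tau>. f \<tau> powr p) x powr (1 / p)
           + kat_int \<rho> \<alpha> \<beta> \<eta> \<kappa> a (\<lambda>\<tau>. g \<tau> powr p) x powr (1 / p)
         \<le> (m + 1) / (m - \<gamma>) *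
           kat_int \<rho> \<alpha> \<beta> \<eta> \<kappa> a (\<lambda>\<tau>. (f \<tau> - \<gamma> * g \<tau>) powr p) x powr (1 / p))"
proof -
  define I where "I \<phi> = kat_int \<rho> \<alpha> \<beta> \<eta> \<kappa> a \<phi> x powr (1 / p)" for \<phi>
  have "p > 0" and "m \<le> M"
    using assms(3,5) assms(14)[of a] by auto
  have ratio: "0 < g \<tau>" "m * g \<tau> \<le> f \<tau>" "f \<tau> \<le> M * g \<tau>" if "\<tau> \<in> {a<..<x}" for \<tau>
    using that assms(4) assms(7)[of \<tau>] assms(14)[of \<tau>] by (auto simp: field_simps)
  have pointwise: "0 \<le> g \<tau>" "0 \<le> f \<tau>" "0 \<le> f \<tau> - \<gamma> * g \<tau>" "f \<tau> - \<gamma> * g \<tau> \<le> f \<tau>"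
    "f \<tau> - \<gamma> * g \<tau> \<le> (M - \<gamma>) / M * f \<tau>" "f \<tau> - \<gamma> * g \<tau> \<le> (M - \<gamma>) * g \<tau>"
    "f \<tau> \<le> m / (m - \<gamma>) * (f \<tau> - \<gamma> * g \<tau>)" "g \<tau> \<le> 1 / (m - \<gamma>) * (f \<tau> - \<gamma> * g \<tau>)"
    if "\<tau> \<in> {a<..<x}" for \<tau>
    using diff_ratio_bounds[OF assms(12,13) ratio[OF that]] ratio(1)[OF that] by simp_all
  note [measurable] = in_Xpc_measurable[OF assms(8)] in_Xpc_measurable[OF assms(9)]
  have integrable_diff: "kat_integrable \<rho> \<alpha> \<eta> a (\<lambda>\<tau>. (f \<tau> - \<gamma> * g \<tau>) powr p) x"
    using assms(10)
  proof (rule kat_integrable_bound)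
    show "\<bar>(f \<tau> - \<gamma> * g \<tau>) powr p\<bar> \<le> f \<tau> powr p" if "\<tau> \<in> {a<..<x}" for \<tau>
      using pointwise(3,4)[OF that] \<open>p > 0\<close> by (auto intro!: powr_mono2)
  qed measurable
  note root_le = kat_int_powr_root_le[OF assms(1) \<open>p > 0\<close>]
  note facts = assms(10-13) integrable_diff \<open>m \<le> M\<close>
  have "I (\<lambda>\<tau>. (f \<tau> - \<gamma> * g \<tau>) powr p) \<le> (M - \<gamma>) / M * I (\<lambda>\<tau>. f \<tau> powr p)"
    unfolding I_def using facts by (intro root_le conjI pointwise) auto
  moreover have "I (\<lambda>\<tau>. (f \<tau> - \<gamma> * g \<tau>) powr p) \<le> (M - \<gamma>) * I (\<lambda>\<tau>. g \<tau> powr p)"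
    unfolding I_def using facts by (intro root_le conjI pointwise) auto
  moreover have "I (\<lambda>\<tau>. f \<tau> powr p) \<le> m / (m - \<gamma>) * I (\<lambda>\<tau>. (f \<tau> - \<gamma> * g \<tau>) powr p)"
    unfolding I_def using facts by (intro root_le conjI pointwise) auto
  moreover have "I (\<lambda>\<tau>. g \<tau> powr p) \<le> 1 / (m - \<gamma>) * I (\<lambda>\<tau>. (f \<tau> - \<gamma> * g \<tau>) powr p)"
    unfolding I_def using facts by (intro root_le conjI pointwise) auto
  ultimately show ?thesis
    unfolding I_def[symmetric] using assms(12,13) \<open>m \<le> M\<close> by (auto simp: field_simps)
qed

end
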